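(* Let $1\leq k\leq n$, let $\Lambda_1,\dots,\Lambda_d\subset\mathbb{P}^n$ be $(k-1)$-dimensional linear subspaces satisfying $\mathrm{SP}(n-k)$, and let $P\subset\mathbb{P}^n$ be a linear subspace of dimension $\alpha\geq 0$. Let $2\leq r\leq d-1$ be an integer such that $P\cap\Lambda_i=\emptyset$ for $i=1,\dots,r$ and $P\cap\Lambda_i\neq\emptyset$ for $i=r+1,\dots,d$. Let $\pi_P\colon\mathbb{P}^n\dashrightarrow\mathbb{P}^{n-\alpha-1}$ be the linear projection from $P$ and set $\Gamma_i:=\pi_P(\Lambda_i)$ for $i=1,\dots,r$ (these are $(k-1)$-planes). Then $\Gamma_1,\dots,\Gamma_r$ satisfy $\mathrm{SP}(n-\alpha-1-k)$ in $\mathbb{P}^{n-\alpha-1}$.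
   Context: For $(k-1)$-dimensional linear subspaces $\Lambda_1,\dots,\Lambda_e\subset\mathbb{P}^N$ (not necessarily distinct), $\mathrm{SP}(N-k)$ means: for every $j\in\{1,\dots,e\}$ and every $(N-k)$-dimensional linear subspace $L\subset\mathbb{P}^N$ meeting each $\Lambda_i$ with $i\neq j$, $L$ also meets $\Lambda_j$. *)

theory Defs
  imports Complex_Main
begin

(* Vectors of C^m are modelled as functions nat => complex vanishing from index m on.
   P^N is the projectivisation of C^(N+1); a projective linear subspace is represented
   by its affine cone, a complex linear subspace of C^(N+1). *)

type_synonym cvec = "nat \<Rightarrow> complex"

definition Vec :: "nat \<Rightarrow> cvec set" where
  "Vec m = {v. \<forall>i\<ge>m. v i = 0}"

definition lincomb :: "cvec list \<Rightarrow> (nat \<Rightarrow> complex) \<Rightarrow> cvec" where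
  "lincomb vs c = (\<lambda>i. \<Sum>j<length vs. c j * (vs ! j) i)"

definition cspan :: "cvec list \<Rightarrow> cvec set" where
  "cspan vs = {lincomb vs c | c. True}"

definition lin_indep :: "cvec list \<Rightarrow> bool" where
  "lin_indep vs \<longleftrightarrow> (\<forall>c. lincomb vs c = (\<lambda>_. 0) \<longrightarrow> (\<forall>j<length vs. c j = 0))"

(* S is (the cone over) an m-dimensional projective linear subspace of P^N, m \<ge> -1
   (m = -1 is the empty subspace) *)
definition proj_subspace :: "nat \<Rightarrow> int \<Rightarrow> cvec set \<Rightarrow> bool" where
  "proj_subspace N m S \<longleftrightarrow> m \<ge> -1 \<and>
     (\<exists>vs. length vs = nat (m + 1) \<and> set vs \<subseteq> Vec (N + 1) \<and> lin_indep vs \<and> S = cspan vs)"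

(* two projective subspaces meet iff their cones share a nonzero vector *)
definition meets :: "cvec set \<Rightarrow> cvec set \<Rightarrow> bool" where
  "meets A B \<longleftrightarrow> (\<exists>v\<in>A \<inter> B. v \<noteq> (\<lambda>_. 0))"

definition SP :: "nat \<Rightarrow> int \<Rightarrow> (nat \<Rightarrow> cvec set) \<Rightarrow> nat \<Rightarrow> bool" where
  "SP N m Lam e \<longleftrightarrow>
     (\<forall>j\<in>{1..e}. \<forall>L. proj_subspace N m L \<longrightarrow>
        (\<forall>i\<in>{1..e} - {j}. meets L (Lam i)) \<longrightarrow> meets L (Lam j))"

definition clinear_on :: "nat \<Rightarrow> (cvec \<Rightarrow> cvec) \<Rightarrow> bool" where
  "clinear_on m f \<longleftrightarrow>
     (\<forall>x\<in>Vec m. \<forall>y\<in>Vec m. f (\<lambda>i. x i + y i) = (\<lambda>i. f x i + f y i)) \<and>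
     (\<forall>c. \<forall>x\<in>Vec m. f (\<lambda>i. c * x i) = (\<lambda>i. c * f x i))"

(* f induces a linear projection P^n --> P^(n-alpha-1) from the subspace with cone W:
   a linear surjection C^(n+1) -> C^(n-alpha) with kernel exactly W *)
definition is_linear_projection :: "nat \<Rightarrow> nat \<Rightarrow> cvec set \<Rightarrow> (cvec \<Rightarrow> cvec) \<Rightarrow> bool" where
  "is_linear_projection n alpha W f \<longleftrightarrow>
     clinear_on (n + 1) f \<and> f ` Vec (n + 1) = Vec (n - alpha) \<and>
     {x \<in> Vec (n + 1). f x = (\<lambda>_. 0)} = W"

end

theory Submission
  imports Defs
begin

text \<open>Given an \<open>(n - \<alpha> - 1 - k)\<close>-plane \<open>L\<close> of the target meeting \<open>\<Gamma>\<^sub>i\<close> for all \<open>i \<noteq> j\<close>,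
  its preimage under the projection from \<open>P\<close> is an \<open>(n - k)\<close>-plane containing \<open>P\<close>. It meets
  \<open>\<Lambda>\<^sub>i\<close> for \<open>i > r\<close> because \<open>P\<close> does, and for \<open>i \<le> r, i \<noteq> j\<close> because \<open>L\<close> meets \<open>\<Gamma>\<^sub>i\<close>.
  By \<open>SP(n - k)\<close> it meets \<open>\<Lambda>\<^sub>j\<close>, and since \<open>\<Lambda>\<^sub>j\<close> is disjoint from the centre \<open>P\<close>, the image
  of a common point is a point of \<open>L \<inter> \<Gamma>\<^sub>j\<close>.\<close>

lemma lincomb_Nil [simp]: "lincomb [] c = (\<lambda>_. 0)"
  by (simp add: lincomb_def)

lemma lincomb_Cons: "lincomb (v # vs) c = (\<lambda>i. c 0 * v i + lincomb vs (\<lambda>j. c (Suc j)) i)"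
  unfolding lincomb_def by (simp only: length_Cons sum.lessThan_Suc_shift) simp

lemma lincomb_append:
  "lincomb (A @ B) c = (\<lambda>i. lincomb A c i + lincomb B (\<lambda>j. c (length A + j)) i)"
  by (induction A arbitrary: c) (simp_all add: lincomb_Cons algebra_simps)

lemma lincomb_cong: "(\<And>j. j < length vs \<Longrightarrow> c j = c' j) \<Longrightarrow> lincomb vs c = lincomb vs c'"
  by (simp add: lincomb_def)

lemma lincomb_zero_coeffs: "(\<And>j. j < length vs \<Longrightarrow> c j = 0) \<Longrightarrow> lincomb vs c = (\<lambda>_. 0)"
  by (simp add: lincomb_def)

lemma lincomb_zero_vectors: "(\<And>v. v \<in> set vs \<Longrightarrow> v = (\<lambda>_. 0)) \<Longrightarrow> lincomb vs c = (\<lambda>_. 0)"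
  using nth_mem by (fastforce simp: lincomb_def intro!: sum.neutral)

lemma lincomb_in_Vec: "set vs \<subseteq> Vec m \<Longrightarrow> lincomb vs c \<in> Vec m"
  by (induction vs arbitrary: c) (auto simp: lincomb_Cons Vec_def)

lemma cspan_subset_Vec: "set vs \<subseteq> Vec m \<Longrightarrow> cspan vs \<subseteq> Vec m"
  using lincomb_in_Vec by (auto simp: cspan_def)

lemma zero_in_cspan: "(\<lambda>_. 0) \<in> cspan vs"
  unfolding cspan_def by (auto simp: lincomb_def intro: exI[of _ "\<lambda>_. 0"])

lemma cspan_append:
  "cspan (A @ B) = {(\<lambda>i. a i + b i) | a b. a \<in> cspan A \<and> b \<in> cspan B}"
proof (intro equalityI subsetI)
  fix x assume "x \<in> cspan (A @ B)"
  then show "x \<in> {(\<lambda>i. a i + b i) | a b. a \<in> cspan A \<and> b \<in> cspan B}"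
    by (auto simp: cspan_def lincomb_append)
next
  fix x assume "x \<in> {(\<lambda>i. a i + b i) | a b. a \<in> cspan A \<and> b \<in> cspan B}"
  then obtain c e where x: "x = (\<lambda>i. lincomb A c i + lincomb B e i)"
    by (auto simp: cspan_def)
  define c' where "c' j = (if j < length A then c j else e (j - length A))" for j
  have "lincomb A c' = lincomb A c" by (rule lincomb_cong) (simp add: c'_def)
  moreover have "(\<lambda>j. c' (length A + j)) = e" by (simp add: c'_def)
  ultimately have "lincomb (A @ B) c' = x" by (simp add: lincomb_append x)
  then show "x \<in> cspan (A @ B)" by (auto simp: cspan_def)
qed

lemma set_subset_cspan: "set vs \<subseteq> cspan vs"
proof
  fix v assume "v \<in> set vs"
  then obtain j where "j < length vs" "vs ! j = v" by (auto simp: in_set_conv_nth)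
  then have "lincomb vs (\<lambda>l. of_bool (l = j)) = v"
    by (simp add: lincomb_def of_bool_def if_distrib[of "\<lambda>a. a * _"] cong: if_cong)
  then show "v \<in> cspan vs" by (auto simp: cspan_def)
qed

lemma proj_subspace_subset_Vec: "proj_subspace N m S \<Longrightarrow> S \<subseteq> Vec (N + 1)"
  unfolding proj_subspace_def using cspan_subset_Vec by blast

lemma proj_subspace_zero: "proj_subspace N m S \<Longrightarrow> (\<lambda>_. 0) \<in> S"
  unfolding proj_subspace_def using zero_in_cspan by blast

lemma clinear_on_add:
  "clinear_on m f \<Longrightarrow> x \<in> Vec m \<Longrightarrow> y \<in> Vec m \<Longrightarrow> f (\<lambda>i. x i + y i) = (\<lambda>i. f x i + f y i)"
  by (simp add: clinear_on_def)

lemma clinear_on_scale: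
  "clinear_on m f \<Longrightarrow> x \<in> Vec m \<Longrightarrow> f (\<lambda>i. c * x i) = (\<lambda>i. c * f x i)"
  by (simp add: clinear_on_def)

lemma clinear_on_zero: "clinear_on m f \<Longrightarrow> f (\<lambda>_. 0) = (\<lambda>_. 0)"
  using clinear_on_scale[of m f "\<lambda>_. 0" 0] by (simp add: Vec_def)

lemma clinear_on_diff:
  assumes f: "clinear_on m f" and x: "x \<in> Vec m" and y: "y \<in> Vec m"
  shows "f (\<lambda>i. x i - y i) = (\<lambda>i. f x i - f y i)"
proof -
  have "(\<lambda>i. - y i) \<in> Vec m" using y by (simp add: Vec_def)
  then have "f (\<lambda>i. x i + - y i) = (\<lambda>i. f x i + f (\<lambda>i. - y i) i)"
    using clinear_on_add[OF f x] by blast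
  also have "f (\<lambda>i. - y i) = (\<lambda>i. - f y i)"
    using clinear_on_scale[OF f y, of "- 1"] by simp
  finally show ?thesis by simp
qed

lemma clinear_on_lincomb:
  assumes f: "clinear_on m f"
  shows "set vs \<subseteq> Vec m \<Longrightarrow> f (lincomb vs c) = lincomb (map f vs) c"
proof (induction vs arbitrary: c)
  case Nil
  then show ?case using clinear_on_zero[OF f] by simp
next
  case (Cons v vs)
  then have v: "v \<in> Vec m" and vs: "set vs \<subseteq> Vec m" by auto
  have "(\<lambda>i. c 0 * v i) \<in> Vec m" using v by (simp add: Vec_def)
  then have "f (lincomb (v # vs) c) =
      (\<lambda>i. f (\<lambda>i. c 0 * v i) i + f (lincomb vs (\<lambda>j. c (Suc j))) i)"
    unfolding lincomb_Cons using clinear_on_add[OF f _ lincomb_in_Vec[OF vs]] by simp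
  then show ?case
    using clinear_on_scale[OF f v] Cons.IH[OF vs] by (simp add: lincomb_Cons)
qed

lemma lift_list_through_image:
  "set ws \<subseteq> f ` A \<Longrightarrow> \<exists>us. set us \<subseteq> A \<and> map f us = ws"
proof (induction ws)
  case (Cons w ws)
  then obtain u us where "u \<in> A" "f u = w" "set us \<subseteq> A" "map f us = ws" by auto
  then show ?case by (intro exI[of _ "u # us"]) simp
qed simp

lemma lin_indep_append_kernel:
  assumes f: "clinear_on m f" and us: "set us \<subseteq> Vec m" and ps: "set ps \<subseteq> Vec m"
    and indep_fus: "lin_indep (map f us)" and indep_ps: "lin_indep ps"
    and kernel: "\<And>p. p \<in> set ps \<Longrightarrow> f p = (\<lambda>_. 0)"
  shows "lin_indep (us @ ps)"
  unfolding lin_indep_def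
proof (intro allI impI)
  fix c j assume c: "lincomb (us @ ps) c = (\<lambda>_. 0)" and j: "j < length (us @ ps)"
  have "lincomb (map f ps) c' = (\<lambda>_. 0)" for c'
    by (rule lincomb_zero_vectors) (auto simp: kernel)
  then have "lincomb (map f us) c = f (lincomb (us @ ps) c)"
    using clinear_on_lincomb[OF f, of "us @ ps"] us ps by (simp add: lincomb_append)
  then have c_us: "c j = 0" if "j < length us" for j
    using indep_fus that c clinear_on_zero[OF f] by (simp add: lin_indep_def)
  then have "lincomb ps (\<lambda>j. c (length us + j)) = (\<lambda>_. 0)"
    using c lincomb_zero_coeffs[of us c] by (simp add: lincomb_append)
  then have c_ps: "c (length us + j) = 0" if "j < length ps" for j
    using indep_ps that unfolding lin_indep_def by blast
  show "c j = 0"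
  proof (cases "j < length us")
    case False
    then show ?thesis using c_ps[of "j - length us"] j by simp
  qed (rule c_us)
qed

lemma cspan_append_kernel:
  assumes f: "clinear_on m f" and us: "set us \<subseteq> Vec m"
    and kernel: "{x \<in> Vec m. f x = (\<lambda>_. 0)} = cspan ps"
  shows "cspan (us @ ps) = {x \<in> Vec m. f x \<in> cspan (map f us)}"
proof (intro equalityI subsetI)
  fix x assume "x \<in> cspan (us @ ps)"
  then obtain a b where x: "x = (\<lambda>i. a i + b i)" and a: "a \<in> cspan us" and b: "b \<in> cspan ps"
    unfolding cspan_append by blast
  from a obtain c where a: "a = lincomb us c" by (auto simp: cspan_def)
  have b': "b \<in> Vec m" "f b = (\<lambda>_. 0)" using b kernel by auto
  have "f x = lincomb (map f us) c"
    using clinear_on_add[OF f lincomb_in_Vec[OF us] b'(1)] b'(2) clinear_on_lincomb[OF f us]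
    by (simp add: x a)
  moreover have "x \<in> Vec m" using lincomb_in_Vec[OF us] b'(1) by (simp add: x a Vec_def)
  ultimately show "x \<in> {x \<in> Vec m. f x \<in> cspan (map f us)}" by (auto simp: cspan_def)
next
  fix x assume "x \<in> {x \<in> Vec m. f x \<in> cspan (map f us)}"
  then obtain c where x: "x \<in> Vec m" and fx: "f x = lincomb (map f us) c"
    by (auto simp: cspan_def)
  define y where "y = lincomb us c"
  have y: "y \<in> Vec m" using lincomb_in_Vec[OF us] by (simp add: y_def)
  have "f (\<lambda>i. x i - y i) = (\<lambda>_. 0)"
    using clinear_on_diff[OF f x y] clinear_on_lincomb[OF f us] fx by (simp add: y_def)
  moreover have "(\<lambda>i. x i - y i) \<in> Vec m" using x y by (simp add: Vec_def)
  ultimately have "(\<lambda>i. x i - y i) \<in> cspan ps" using kernel by blast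
  moreover have "y \<in> cspan us" by (auto simp: y_def cspan_def)
  ultimately show "x \<in> cspan (us @ ps)"
    unfolding cspan_append by force
qed

lemma proj_subspace_preimage:
  assumes f: "is_linear_projection n alpha P f" and P: "proj_subspace n (int alpha) P"
    and L: "proj_subspace (n - alpha - 1) m L" and "alpha < n"
  shows "proj_subspace n (m + int alpha + 1) {x \<in> Vec (n + 1). f x \<in> L}"
proof -
  have lin: "clinear_on (n + 1) f" and onto: "f ` Vec (n + 1) = Vec (n - alpha)"
    and kernel: "{x \<in> Vec (n + 1). f x = (\<lambda>_. 0)} = P"
    using f by (auto simp: is_linear_projection_def)
  obtain ps where ps: "length ps = alpha + 1" "set ps \<subseteq> Vec (n + 1)" "lin_indep ps"
    "P = cspan ps"
    using P by (auto simp: proj_subspace_def nat_add_distrib)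
  obtain ws where ws: "length ws = nat (m + 1)" "set ws \<subseteq> Vec (n - alpha)" "lin_indep ws"
    "L = cspan ws" and "m \<ge> -1"
    using L \<open>alpha < n\<close> by (auto simp: proj_subspace_def Suc_diff_Suc)
  obtain us where us: "set us \<subseteq> Vec (n + 1)" "map f us = ws"
    using lift_list_through_image[of ws f "Vec (n + 1)"] ws(2) onto by auto
  have ps_kernel: "f p = (\<lambda>_. 0)" if "p \<in> set ps" for p
    using that set_subset_cspan[of ps] ps(4) kernel by blast
  have "lin_indep (us @ ps)"
    using lin_indep_append_kernel[OF lin us(1) ps(2) _ ps(3) ps_kernel] us(2) ws(3) by simp
  moreover have "cspan (us @ ps) = {x \<in> Vec (n + 1). f x \<in> L}"
    using cspan_append_kernel[OF lin us(1) kernel[unfolded ps(4)]] by (simp add: us(2) ws(4))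
  moreover have "length us = length ws" using arg_cong[of _ _ length, OF us(2)] by simp
  then have "length (us @ ps) = nat (m + int alpha + 1 + 1)"
    using ws(1) ps(1) \<open>m \<ge> -1\<close> by simp
  moreover have "set (us @ ps) \<subseteq> Vec (n + 1)" using us(1) ps(2) by simp
  ultimately show ?thesis
    using \<open>m \<ge> -1\<close> unfolding proj_subspace_def by (intro conjI exI[of _ "us @ ps"]) simp_all
qed

lemma meets_preimage_iff:
  assumes f: "clinear_on m f" and kernel: "{x \<in> Vec m. f x = (\<lambda>_. 0)} = K"
    and "\<Lambda> \<subseteq> Vec m" and "\<not> meets K \<Lambda>"
  shows "meets {x \<in> Vec m. f x \<in> L} \<Lambda> \<longleftrightarrow> meets L (f ` \<Lambda>)"
proof
  assume "meets {x \<in> Vec m. f x \<in> L} \<Lambda>"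
  then obtain v where v: "v \<in> \<Lambda>" "v \<in> Vec m" "f v \<in> L" "v \<noteq> (\<lambda>_. 0)"
    by (auto simp: meets_def)
  then have "f v \<noteq> (\<lambda>_. 0)" using kernel \<open>\<not> meets K \<Lambda>\<close> by (auto simp: meets_def)
  with v show "meets L (f ` \<Lambda>)" by (auto simp: meets_def)
next
  assume "meets L (f ` \<Lambda>)"
  then obtain v where v: "v \<in> \<Lambda>" "f v \<in> L" "f v \<noteq> (\<lambda>_. 0)"
    by (auto simp: meets_def)
  then have "v \<noteq> (\<lambda>_. 0)" using clinear_on_zero[OF f] by auto
  with v \<open>\<Lambda> \<subseteq> Vec m\<close> show "meets {x \<in> Vec m. f x \<in> L} \<Lambda>" by (auto simp: meets_def)
qed

theorem lemma2p13:
  fixes n k d r alpha :: nat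
    and Lam :: "nat \<Rightarrow> cvec set"
    and P :: "cvec set"
    and f :: "cvec \<Rightarrow> cvec"
  assumes "1 \<le> k" and "k \<le> n"
    and "\<And>i. i \<in> {1..d} \<Longrightarrow> proj_subspace n (int k - 1) (Lam i)"
    and "SP n (int n - int k) Lam d"
    and "proj_subspace n (int alpha) P"
    and "2 \<le> r" and "r \<le> d - 1"
    and "\<And>i. i \<in> {1..r} \<Longrightarrow> \<not> meets P (Lam i)"
    and "\<And>i. i \<in> {r+1..d} \<Longrightarrow> meets P (Lam i)"
    and "is_linear_projection n alpha P f"
  shows "SP (n - alpha - 1) (int n - int alpha - 1 - int k) (\<lambda>i. f ` Lam i) r"
  unfolding SP_def
proof (intro ballI allI impI)
  fix j L
  assume j: "j \<in> {1..r}"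
    and L: "proj_subspace (n - alpha - 1) (int n - int alpha - 1 - int k) L"
    and meets_others: "\<forall>i\<in>{1..r} - {j}. meets L (f ` Lam i)"
  define L' where "L' = {x \<in> Vec (n + 1). f x \<in> L}"
  have lin: "clinear_on (n + 1) f" and kernel: "{x \<in> Vec (n + 1). f x = (\<lambda>_. 0)} = P"
    using assms(10) by (auto simp: is_linear_projection_def)
  have "alpha < n" using L \<open>1 \<le> k\<close> by (simp add: proj_subspace_def)
  then have "proj_subspace n (int n - int alpha - 1 - int k + int alpha + 1) L'"
    using proj_subspace_preimage[OF assms(10,5) L] by (simp add: L'_def)
  then have "proj_subspace n (int n - int k) L'" by simp
  moreover have "P \<subseteq> L'"
    using kernel proj_subspace_zero[OF L] by (auto simp: L'_def)
  then have "meets L' (Lam i)" if i: "i \<in> {1..d} - {j}" for i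
  proof (cases "i \<le> r")
    case True
    then have "\<not> meets P (Lam i)" "meets L (f ` Lam i)"
      using i assms(8) meets_others by auto
    moreover have "Lam i \<subseteq> Vec (n + 1)" using i assms(3) proj_subspace_subset_Vec by blast
    ultimately show ?thesis using meets_preimage_iff[OF lin kernel] by (simp add: L'_def)
  next
    case False
    then have "meets P (Lam i)" using i assms(9) by simp
    with \<open>P \<subseteq> L'\<close> show ?thesis by (auto simp: meets_def)
  qed
  moreover have "j \<in> {1..d}" using j \<open>r \<le> d - 1\<close> by auto
  ultimately have "meets L' (Lam j)" using assms(4) unfolding SP_def by blast
  moreover have "Lam j \<subseteq> Vec (n + 1)"
    using \<open>j \<in> {1..d}\<close> assms(3) proj_subspace_subset_Vec by blast
  ultimately show "meets L (f ` Lam j)"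
    using meets_preimage_iff[OF lin kernel] assms(8) j by (simp add: L'_def)
qed

end
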